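(* $\mathfrak{F}'\subseteq\mathcal{P}$, i.e. every connected graph with the extended distinguished edge property has property GNRP.
   Context: Graphs are finite, simple and undirected. $\mathbb{T}=\{z\in\mathbb{C}:|z|=1\}$, $\mathbb{I}=[0,2\pi)$. A $\mathbb{T}$-gain on $G$ is a map $\varphi$ from oriented edges to $\mathbb{T}$ with $\varphi(\overrightarrow{e_{ts}})=\varphi(\overrightarrow{e_{st}})^{-1}$; $A(\Phi)$ for $\Phi=(G,\varphi)$ is the Hermitian matrix with $(s,t)$ entry $\varphi(\overrightarrow{e_{st}})$ if $v_s\sim v_t$, else $0$; $\mathcal{T}_G$ is the set of all $\mathbb{T}$-gain graphs on $G$. $\Re(A)\ge0$ means the real part of every entry of $A$ is nonnegative. The gain of a directed cycle is the product of gains of its oriented edges. A rooted spanning tree $T$ with root $v_r$ induces the tree order ($v_x\le v_y$ iff $v_x$ is on the $T$-path from $v_r$ to $v_y$); $T$ is normal if adjacent vertices of $G$ are always comparable. The suitably oriented graph $\overrightarrow{G_T}$ orients each edge $e_{st}$ with $v_s\le v_t$ as $\overrightarrow{e_{st}}$ if $e_{st}\in E(T)$ and as $\overrightarrow{e_{ts}}$ otherwise; the $m-n+1$ fundamental cycles $C_j$ of $T$ become directed cycles $\overrightarrow{C_j(T)}$. For $r=(c_1,\dots,c_{m-n+1})\in\mathbb{I}^{m-n+1}$, $\mathcal{A}_T(r)=\{(G,\varphi)\in\mathcal{T}_G:\varphi(\overrightarrow{C_j(T)})=e^{ic_j}\ \forall j\}$. $G$ has GNRP (w.r.t. normal spanning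 tree $T$) if for each $r$ there is $\Phi\in\mathcal{A}_T(r)$ with $\Re(A(\Phi))\ge0$; $\mathcal{P}$ is the class of connected graphs with GNRP. The sum of subgraphs is the subgraph consisting of all edges in at least one of them. A fundamental subgraph of $G$ w.r.t. $T$ is the sum of a maximal collection of fundamental cycles whose sum intersects $T$ in a subtree. $K_4'$ denotes either $K_4$ or a subdivision of $K_4$ (a graph obtained from $K_4$ by repeatedly replacing an edge by a path of length two through a new vertex). A fundamental subgraph $\mathfrak{B}$ whose set $S$ of fundamental cycles contains three cycles $C_1',C_2',C_3'$ with $C_1'+C_2'+C_3'$ equal to a $K_4'$ is called $K_4'$-initiated; it equals $K_4'+C_1+\cdots+C_s$ where $C_1,\dots,C_s$ are the other cycles of $S$, and it has DEP if the $C_i$ can be ordered $C_{k_1},\dots,C_{k_s}$ so that $|E(C_{k_i})\setminus E(C_{k_0}+C_{k_1}+\cdots+C_{k_{i-1}})|>1$ for $i=1,\dots,s$, where $C_{k_0}=K_4'$. A non-$K_4'$-initiated fundamental subgraph built from cycles $C_1,\dots,C_s$ has DEP if they can be ordered $C_{k_1},\dots,C_{k_s}$ with $|E(C_{k_i})\setminus E(C_{k_1}+\cdots+C_{k_{i-1}})|>1$ for $i=2,\dots,s$. A connected graph has the extended distinguished edge property (EDEP) if all its $K_4'$-initiated and non-$K_4'$-initiated fundamental subgraphs with respect to a normal spanning tree $T$ have DEP (in the respective sense). $\mathfrak{F}'$ is the collection of connected graphs with EDEP. *)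

theory Defs
  imports Complex_Main
begin

definition simple_graph :: "'a set \<Rightarrow> 'a set set \<Rightarrow> bool" where
  "simple_graph V E \<longleftrightarrow> finite V \<and> (\<forall>e\<in>E. \<exists>x y. e = {x, y} \<and> x \<noteq> y \<and> x \<in> V \<and> y \<in> V)"

definition is_path :: "'a set set \<Rightarrow> 'a list \<Rightarrow> bool" where
  "is_path F p \<longleftrightarrow> p \<noteq> [] \<and> distinct p \<and> (\<forall>i. Suc i < length p \<longrightarrow> {p ! i, p ! Suc i} \<in> F)"

definition path_edges :: "'a list \<Rightarrow> 'a set set" where
  "path_edges p = {{p ! i, p ! Suc i} | i. Suc i < length p}"

definition connected_graph :: "'a set \<Rightarrow> 'a set set \<Rightarrow> bool" where
  "connected_graph V E \<longleftrightarrow> V \<noteq> {} \<and>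
     (\<forall>x\<in>V. \<forall>y\<in>V. \<exists>p. is_path E p \<and> hd p = x \<and> last p = y)"

definition has_cycle :: "'a set set \<Rightarrow> bool" where
  "has_cycle F \<longleftrightarrow> (\<exists>p. is_path F p \<and> length p \<ge> 3 \<and> {last p, hd p} \<in> F)"

definition is_tree_edges :: "'a set set \<Rightarrow> bool" where
  "is_tree_edges F \<longleftrightarrow> \<not> has_cycle F \<and>
     (\<forall>x\<in>\<Union>F. \<forall>y\<in>\<Union>F. \<exists>p. is_path F p \<and> hd p = x \<and> last p = y)"

definition spanning_tree :: "'a set \<Rightarrow> 'a set set \<Rightarrow> 'a set set \<Rightarrow> bool" where
  "spanning_tree V E T \<longleftrightarrow> T \<subseteq> E \<and> connected_graph V T \<and> \<not> has_cycle T"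

definition tree_le :: "'a set set \<Rightarrow> 'a \<Rightarrow> 'a \<Rightarrow> 'a \<Rightarrow> bool" where
  "tree_le T r x y \<longleftrightarrow> (\<exists>p. is_path T p \<and> hd p = r \<and> last p = y \<and> x \<in> set p)"

definition normal_spanning_tree :: "'a set \<Rightarrow> 'a set set \<Rightarrow> 'a set set \<Rightarrow> 'a \<Rightarrow> bool" where
  "normal_spanning_tree V E T r \<longleftrightarrow> spanning_tree V E T \<and> r \<in> V \<and>
     (\<forall>x y. {x, y} \<in> E \<longrightarrow> tree_le T r x y \<or> tree_le T r y x)"

text \<open>The T-path between x and y (unique in a tree).\<close>
definition tpath :: "'a set set \<Rightarrow> 'a \<Rightarrow> 'a \<Rightarrow> 'a list" where
  "tpath T x y = (THE p. is_path T p \<and> hd p = x \<and> last p = y)"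

definition fcycle :: "'a set set \<Rightarrow> 'a set \<Rightarrow> 'a set set" where
  "fcycle T e = (case (SOME (x, y). e = {x, y} \<and> x \<noteq> y) of (x, y) \<Rightarrow>
       insert e (path_edges (tpath T x y)))"

definition orient :: "'a set set \<Rightarrow> 'a \<Rightarrow> 'a set \<Rightarrow> 'a \<times> 'a" where
  "orient T r f = (case (SOME (s, t). f = {s, t} \<and> s \<noteq> t \<and> tree_le T r s t) of (s, t) \<Rightarrow>
       (if f \<in> T then (s, t) else (t, s)))"

text \<open>\<open>\<phi> s t\<close> is the gain of the oriented edge from s to t.\<close>
definition gain_fun :: "'a set set \<Rightarrow> ('a \<Rightarrow> 'a \<Rightarrow> complex) \<Rightarrow> bool" where
  "gain_fun E \<phi> \<longleftrightarrow> (\<forall>s t. {s, t} \<in> E \<longrightarrow> cmod (\<phi> s t) = 1 \<and> \<phi> t s = inverse (\<phi> s t))"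

text \<open>The Hermitian adjacency matrix A(\<Phi>), as a function of vertex pairs.\<close>
definition gain_adj :: "'a set set \<Rightarrow> ('a \<Rightarrow> 'a \<Rightarrow> complex) \<Rightarrow> 'a \<Rightarrow> 'a \<Rightarrow> complex" where
  "gain_adj E \<phi> s t = (if {s, t} \<in> E then \<phi> s t else 0)"

definition cycle_gain :: "'a set set \<Rightarrow> 'a \<Rightarrow> ('a \<Rightarrow> 'a \<Rightarrow> complex) \<Rightarrow> 'a set \<Rightarrow> complex" where
  "cycle_gain T r \<phi> e = (\<Prod>f\<in>fcycle T e. case orient T r f of (a, b) \<Rightarrow> \<phi> a b)"

text \<open>GNRP w.r.t. (T, r): for every prescription of angles c_e \<in> [0,2\<pi>) of the fundamental
  cycles (indexed by their non-tree edges) there is \<Phi> in \<open>A_T(c)\<close> with Re(A(\<Phi>)) \<ge> 0.\<close>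
definition GNRP :: "'a set \<Rightarrow> 'a set set \<Rightarrow> 'a set set \<Rightarrow> 'a \<Rightarrow> bool" where
  "GNRP V E T r \<longleftrightarrow>
     (\<forall>c :: 'a set \<Rightarrow> real. (\<forall>e\<in>E - T. c e \<in> {0..<2*pi}) \<longrightarrow>
        (\<exists>\<phi>. gain_fun E \<phi> \<and>
             (\<forall>e\<in>E - T. cycle_gain T r \<phi> e = exp (\<i> * complex_of_real (c e))) \<and>
             (\<forall>s\<in>V. \<forall>t\<in>V. 0 \<le> Re (gain_adj E \<phi> s t))))"

text \<open>Collections of fundamental cycles are given by their sets of non-tree edges.\<close>
definition cyc_sum :: "'a set set \<Rightarrow> 'a set set \<Rightarrow> 'a set set" where
  "cyc_sum T S = (\<Union>e\<in>S. fcycle T e)"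

definition admissible_coll :: "'a set set \<Rightarrow> 'a set set \<Rightarrow> 'a set set \<Rightarrow> bool" where
  "admissible_coll E T S \<longleftrightarrow> S \<subseteq> E - T \<and> is_tree_edges (cyc_sum T S \<inter> T)"

definition fundamental_coll :: "'a set set \<Rightarrow> 'a set set \<Rightarrow> 'a set set \<Rightarrow> bool" where
  "fundamental_coll E T S \<longleftrightarrow> admissible_coll E T S \<and>
     (\<forall>S'. admissible_coll E T S' \<and> S \<subseteq> S' \<longrightarrow> S' = S)"

inductive K4' :: "'a set set \<Rightarrow> bool" where
  base: "distinct [a, b, c, d] \<Longrightarrow> K4' {{a, b}, {a, c}, {a, d}, {b, c}, {b, d}, {c, d}}"
| subdiv: "K4' H \<Longrightarrow> {x, y} \<in> H \<Longrightarrow> z \<notin> \<Union>H \<Longrightarrow>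
             K4' ((H - {{x, y}}) \<union> {{x, z}, {z, y}})"

definition K4_initiated :: "'a set set \<Rightarrow> 'a set set \<Rightarrow> bool" where
  "K4_initiated T S \<longleftrightarrow> (\<exists>e1\<in>S. \<exists>e2\<in>S. \<exists>e3\<in>S. distinct [e1, e2, e3] \<and>
       K4' (fcycle T e1 \<union> fcycle T e2 \<union> fcycle T e3))"

definition DEP_K4 :: "'a set set \<Rightarrow> 'a set set \<Rightarrow> bool" where
  "DEP_K4 T S \<longleftrightarrow> (\<exists>e1\<in>S. \<exists>e2\<in>S. \<exists>e3\<in>S. distinct [e1, e2, e3] \<and>
       K4' (fcycle T e1 \<union> fcycle T e2 \<union> fcycle T e3) \<and>
       (\<exists>ks. distinct ks \<and> set ks = S - {e1, e2, e3} \<and>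
          (\<forall>i < length ks. card (fcycle T (ks ! i) -
             (fcycle T e1 \<union> fcycle T e2 \<union> fcycle T e3 \<union> cyc_sum T (set (take i ks)))) > 1)))"

definition DEP_plain :: "'a set set \<Rightarrow> 'a set set \<Rightarrow> bool" where
  "DEP_plain T S \<longleftrightarrow> (\<exists>ks. distinct ks \<and> set ks = S \<and>
       (\<forall>i. 1 \<le> i \<and> i < length ks \<longrightarrow>
          card (fcycle T (ks ! i) - cyc_sum T (set (take i ks))) > 1))"

definition EDEP :: "'a set set \<Rightarrow> 'a set set \<Rightarrow> bool" where
  "EDEP E T \<longleftrightarrow> (\<forall>S. fundamental_coll E T S \<longrightarrow>
       (K4_initiated T S \<longrightarrow> DEP_K4 T S) \<and> (\<not> K4_initiated T S \<longrightarrow> DEP_plain T S))"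

end

theory Submission
  imports Defs
begin

abbreviation is_walk :: "'a set set \<Rightarrow> 'a list \<Rightarrow> bool" where
  "is_walk F \<equiv> successively (\<lambda>x y. {x, y} \<in> F)"

lemma is_path_iff_walk: "is_path F p \<longleftrightarrow> p \<noteq> [] \<and> distinct p \<and> is_walk F p"
  by (simp add: is_path_def successively_conv_nth)

lemma is_walk_rev [simp]: "is_walk F (rev p) \<longleftrightarrow> is_walk F p"
  by (simp add: insert_commute)

lemma is_walk_mono: "is_walk F p \<Longrightarrow> F \<subseteq> G \<Longrightarrow> is_walk G p"
  by (erule successively_mono) auto

lemma is_path_mono: "is_path F p \<Longrightarrow> F \<subseteq> G \<Longrightarrow> is_path G p"
  by (auto simp: is_path_iff_walk intro: is_walk_mono)

lemma has_cycle_mono: "has_cycle F \<Longrightarrow> F \<subseteq> G \<Longrightarrow> has_cycle G"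
  unfolding has_cycle_def by (meson in_mono is_path_mono)

lemma distinct_hd_last: "distinct p \<Longrightarrow> p \<noteq> [] \<Longrightarrow> hd p = last p \<Longrightarrow> p = [hd p]"
  by (cases p) (auto simp: last_in_set split: if_splits)

lemma path_if_walk:
  "is_walk F w \<Longrightarrow> w \<noteq> [] \<Longrightarrow> \<exists>p. is_path F p \<and> hd p = hd w \<and> last p = last w"
proof (induction "length w" arbitrary: w rule: less_induct)
  case less
  show ?case
  proof (cases "distinct w")
    case True
    then show ?thesis using less.prems by (auto simp: is_path_iff_walk)
  next
    case False
    then obtain xs y ys zs where w: "w = xs @ [y] @ ys @ [y] @ zs"
      using not_distinct_decomp by blast
    have "is_walk F ((xs @ [y]) @ ys @ [y] @ zs)" "is_walk F ((xs @ [y] @ ys) @ y # zs)"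
      using less.prems(1) unfolding w by simp_all
    then have "is_walk F (xs @ [y])" "is_walk F (y # zs)"
      by (simp_all only: successively_append_iff)
    then have "is_walk F (xs @ [y] @ zs)"
      by (auto simp: successively_append_iff successively_Cons)
    then show ?thesis
      using less.hyps[of "xs @ [y] @ zs"] by (auto simp: w hd_append)
  qed
qed

lemma has_cycle_if_internally_disjoint_paths:
  assumes p: "is_path F p" and q: "is_path F q" and ends: "hd p = hd q" "last p = last q"
    and "p \<noteq> q" and disj: "set p \<inter> set q \<subseteq> {hd p, last p}"
  shows "has_cycle F"
proof -
  have "hd p \<noteq> last p"
  proof
    assume "hd p = last p"
    then have "p = [hd p]" "q = [hd q]"
      using p q ends unfolding is_path_def by (metis distinct_hd_last)+
    then show False using \<open>p \<noteq> q\<close> ends by metis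
  qed
  obtain x p' where px: "p = x # p'" using p by (cases p) (auto simp: is_path_def)
  define y where "y = last p"
  have "tl q \<noteq> []"
    using q ends \<open>hd p \<noteq> last p\<close> by (cases q) (auto simp: is_path_def)
  then obtain q' where qx: "q = x # q' @ [y]"
    using q ends px unfolding y_def is_path_def
    by (metis append_butlast_last_id last_tl list.collapse list.sel(1))
  have dq: "distinct (x # q' @ [y])" and wq: "is_walk F ((x # q') @ [y])"
    using q qx by (auto simp: is_path_iff_walk)
  have wp: "distinct p" "is_walk F p" using p by (auto simp: is_path_iff_walk)
  have "set q' \<inter> set p = {}"
    using disj dq px qx y_def by auto
  have wq': "is_walk F (x # q')" "q' \<noteq> [] \<Longrightarrow> {last q', y} \<in> F"
    using wq[unfolded successively_append_iff] by auto
  define c where "c = p @ rev q'"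
  have "is_walk F c"
    unfolding c_def successively_append_iff
    using wp(2) wq' by (auto simp: successively_Cons hd_rev y_def insert_commute)
  moreover have "distinct c"
    using wp(1) dq \<open>set q' \<inter> set p = {}\<close> by (auto simp: c_def)
  ultimately have "is_path F c"
    by (simp add: is_path_iff_walk c_def px)
  moreover have "length c \<ge> 3"
  proof (cases "q' = []")
    case True
    then have "p \<noteq> [x, y]" using \<open>p \<noteq> q\<close> qx by simp
    then show ?thesis
      using px \<open>hd p \<noteq> last p\<close> unfolding y_def
      by (cases p' rule: remdups_adj.cases) (auto simp: c_def)
  next
    case False
    then show ?thesis
      using px \<open>hd p \<noteq> last p\<close> by (cases p') (auto simp: c_def Suc_le_eq)
  qed
  moreover have "{last c, hd c} \<in> F"
  proof (cases "q' = []")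
    case True
    then show ?thesis using wq px by (simp add: c_def y_def insert_commute)
  next
    case False
    then show ?thesis using wq'(1) px by (simp add: c_def last_rev successively_Cons insert_commute)
  qed
  ultimately show ?thesis unfolding has_cycle_def by blast
qed

lemma path_unique:
  assumes "\<not> has_cycle F"
  shows "is_path F p \<Longrightarrow> is_path F q \<Longrightarrow> hd p = hd q \<Longrightarrow> last p = last q \<Longrightarrow> p = q"
proof (induction "length p + length q" arbitrary: p q rule: less_induct)
  case less
  show ?case
  proof (cases "set p \<inter> set q \<subseteq> {hd p, last p}")
    case True
    then show ?thesis
      using has_cycle_if_internally_disjoint_paths less.prems assms by blast
  next
    case False
    then obtain v where v: "v \<in> set p" "v \<in> set q" "v \<noteq> hd p" "v \<noteq> last p" by blast
    obtain p1 p2 where pv: "p = p1 @ v # p2" using split_list[OF v(1)] by blast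
    obtain q1 q2 where qv: "q = q1 @ v # q2" using split_list[OF v(2)] by blast
    have ne: "p1 \<noteq> []" "p2 \<noteq> []" "q1 \<noteq> []" "q2 \<noteq> []"
      using v less.prems(3,4) pv qv by auto
    have paths: "is_path F (p1 @ [v])" "is_path F (q1 @ [v])" "is_path F (v # p2)" "is_path F (v # q2)"
      using less.prems(1,2) pv qv
      by (auto simp: is_path_iff_walk successively_append_iff successively_Cons)
    have "p1 @ [v] = q1 @ [v]"
      by (rule less.hyps[OF _ paths(1,2)]) (use ne pv qv less.prems(3) in auto)
    moreover have "v # p2 = v # q2"
      by (rule less.hyps[OF _ paths(3,4)]) (use ne pv qv less.prems(4) in auto)
    ultimately have "p1 = q1" "p2 = q2" by simp_all
    then show ?thesis using pv qv by simp
  qed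
qed

lemma tpath_eq:
  assumes "\<not> has_cycle F" "is_path F p"
  shows "tpath F (hd p) (last p) = p"
  unfolding tpath_def by (rule the_equality) (use assms path_unique in auto)

definition linked :: "'a set set \<Rightarrow> 'a \<Rightarrow> 'a \<Rightarrow> bool" where
  "linked F = (\<lambda>x y. {x, y} \<in> F)\<^sup>*\<^sup>*"

lemma linked_refl: "linked F x x"
  by (simp add: linked_def)

lemma linked_sym: "linked F x y \<Longrightarrow> linked F y x"
proof -
  have "symp (\<lambda>x y. {x, y} \<in> F)" by (auto intro: sympI simp: insert_commute)
  then show "linked F x y \<Longrightarrow> linked F y x"
    unfolding linked_def by (blast dest: sympD[OF symp_rtranclp])
qed

lemma linked_trans: "linked F x y \<Longrightarrow> linked F y z \<Longrightarrow> linked F x z"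
  unfolding linked_def by (rule rtranclp_trans)

lemma linked_mono: "linked F x y \<Longrightarrow> F \<subseteq> G \<Longrightarrow> linked G x y"
  unfolding linked_def by (erule rtranclp_mono[THEN predicate2D, rotated]) auto

lemma linked_edge: "{x, y} \<in> F \<Longrightarrow> linked F x y"
  by (simp add: linked_def r_into_rtranclp)

lemma linked_hd_if_walk: "is_walk F w \<Longrightarrow> y \<in> set w \<Longrightarrow> linked F (hd w) y"
proof (induction w)
  case (Cons x w)
  show ?case
  proof (cases "y = x")
    case False
    then have "w \<noteq> []" "{x, hd w} \<in> F" "linked F (hd w) y"
      using Cons by (auto simp: successively_Cons)
    then show ?thesis
      using linked_edge linked_trans by fastforce
  qed (simp add: linked_refl)
qed simp

lemma linked_if_walk:
  assumes "is_walk F w" "x \<in> set w" "y \<in> set w"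
  shows "linked F x y"
proof -
  have "linked F (hd w) x" "linked F (hd w) y"
    using assms by (simp_all add: linked_hd_if_walk)
  then show ?thesis by (meson linked_sym linked_trans)
qed

lemma walk_if_linked:
  "linked F x y \<Longrightarrow> \<exists>w. is_walk F w \<and> w \<noteq> [] \<and> hd w = x \<and> last w = y"
  unfolding linked_def
proof (induction rule: rtranclp_induct)
  case base
  show ?case by (rule exI[of _ "[x]"]) simp
next
  case (step y z)
  then obtain w where "is_walk F w" "w \<noteq> []" "hd w = x" "last w = y" by blast
  with step.hyps(2) show ?case
    by (intro exI[of _ "w @ [z]"]) (auto simp: successively_append_iff)
qed

lemma linked_iff_path: "linked F x y \<longleftrightarrow> (\<exists>p. is_path F p \<and> hd p = x \<and> last p = y)"
  by (metis hd_in_set is_path_iff_walk last_in_set linked_if_walk path_if_walk walk_if_linked)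

lemma is_tree_edges_iff:
  "is_tree_edges F \<longleftrightarrow> \<not> has_cycle F \<and> (\<forall>x\<in>\<Union>F. \<forall>y\<in>\<Union>F. linked F x y)"
  by (simp add: is_tree_edges_def linked_iff_path)

lemma is_tree_edges_Un:
  assumes "is_tree_edges A" "is_tree_edges B" "\<not> has_cycle (A \<union> B)"
    and "z \<in> \<Union>A" "z \<in> \<Union>B"
  shows "is_tree_edges (A \<union> B)"
proof -
  have "linked (A \<union> B) x z" if "x \<in> \<Union>(A \<union> B)" for x
    using that assms(1,2,4,5) unfolding is_tree_edges_iff
    by (metis UnCI UnE Union_Un_distrib linked_mono sup.cobounded1 sup.cobounded2)
  then show ?thesis
    using assms(3) unfolding is_tree_edges_iff by (meson linked_sym linked_trans)
qed

section \<open>Edges and degrees along a path\<close>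

lemma path_edges_Nil [simp]: "path_edges [] = {}"
  and path_edges_singleton [simp]: "path_edges [x] = {}"
  by (auto simp: path_edges_def)

lemma path_edges_Cons_Cons [simp]: "path_edges (x # y # p) = insert {x, y} (path_edges (y # p))"
proof -
  have "{i. Suc i < length (x # y # p)} = insert 0 (Suc ` {i. Suc i < length (y # p)})"
    by (auto simp: image_iff) (metis Suc_less_eq not0_implies_Suc)
  then show ?thesis
    unfolding path_edges_def by (auto simp: setcompr_eq_image image_insert image_image)
qed

lemma finite_path_edges [simp]: "finite (path_edges p)"
  by (induction p rule: induct_list012) auto

lemma path_edges_subset: "is_walk F p \<Longrightarrow> path_edges p \<subseteq> F"
  by (induction p rule: induct_list012) auto

lemma is_walk_path_edges: "is_walk (path_edges p) p"
  by (auto simp: successively_conv_nth path_edges_def)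

lemma Union_path_edges_subset: "\<Union>(path_edges p) \<subseteq> set p"
  by (induction p rule: induct_list012) auto

lemma path_edges_nonempty: "length p \<ge> 2 \<Longrightarrow> path_edges p \<noteq> {}"
  by (cases p rule: remdups_adj.cases) auto

definition degree :: "'a set set \<Rightarrow> 'a \<Rightarrow> nat" where
  "degree F v = card {f \<in> F. v \<in> f}"

definition two_regular :: "'a set set \<Rightarrow> bool" where
  "two_regular F \<longleftrightarrow> (\<forall>v. degree F v \<in> {0, 2})"

lemma degree_path_edges:
  assumes d: "distinct p" and l: "length p \<ge> 2" and k: "k < length p"
  shows "degree (path_edges p) (p ! k) = (if k = 0 \<or> k = length p - 1 then 1 else 2)"
proof -
  define g where "g i = {p ! i, p ! Suc i}" for i
  define I where "I = {i. Suc i < length p \<and> (i = k \<or> Suc i = k)}"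
  have "inj_on g {i. Suc i < length p}"
  proof (rule inj_onI)
    fix i j assume "i \<in> {i. Suc i < length p}" "j \<in> {i. Suc i < length p}" "g i = g j"
    then show "i = j" using d by (auto simp: g_def doubleton_eq_iff nth_eq_iff_index_eq)
  qed
  moreover have "{f \<in> path_edges p. p ! k \<in> f} = g ` I"
    using d k by (auto simp: path_edges_def g_def I_def nth_eq_iff_index_eq)
  ultimately have "degree (path_edges p) (p ! k) = card I"
    unfolding degree_def by (metis (no_types, lifting) I_def card_image inj_on_subset mem_Collect_eq subsetI)
  also have "I = (if k = 0 then {0} else if k = length p - 1 then {k - 1} else {k, k - 1})"
    using l k by (auto simp: I_def)
  finally show ?thesis using l k by auto
qed

lemma two_regular_cycle:
  assumes d: "distinct p" and l: "length p \<ge> 2" and ne: "{hd p, last p} \<notin> path_edges p"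
  shows "two_regular (insert {hd p, last p} (path_edges p))"
  unfolding two_regular_def
proof
  fix v
  let ?e = "{hd p, last p}"
  show "degree (insert ?e (path_edges p)) v \<in> {0, 2}"
  proof (cases "v \<in> set p")
    case False
    moreover have "p \<noteq> []" using l by auto
    ultimately have "{f \<in> insert ?e (path_edges p). v \<in> f} = {}"
      using Union_path_edges_subset[of p] by auto
    then show ?thesis by (simp add: degree_def)
  next
    case True
    then obtain k where k: "k < length p" "v = p ! k" by (metis in_set_conv_nth)
    have "p \<noteq> []" using l by auto
    then have "hd p = p ! 0" "last p = p ! (length p - 1)"
      by (simp_all add: hd_conv_nth last_conv_nth)
    moreover have "0 < length p" "length p - 1 < length p" using l by auto
    ultimately have "v \<in> ?e \<longleftrightarrow> k = 0 \<or> k = length p - 1"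
      using d k by (auto simp: nth_eq_iff_index_eq)
    moreover have "{f \<in> insert ?e (path_edges p). v \<in> f} =
        (if v \<in> ?e then insert ?e {f \<in> path_edges p. v \<in> f} else {f \<in> path_edges p. v \<in> f})"
      by auto
    ultimately show ?thesis
      using degree_path_edges[OF d l k(1)] ne k(2) by (auto simp: degree_def)
  qed
qed

locale normal_tree =
  fixes V :: "'a set" and E :: "'a set set" and T :: "'a set set" and r :: 'a
  assumes simple: "simple_graph V E" and normal: "normal_spanning_tree V E T r"
begin

lemma edgeE:
  assumes "e \<in> E"
  obtains x y where "e = {x, y}" "x \<noteq> y" "x \<in> V" "y \<in> V"
  using assms simple by (auto simp: simple_graph_def)

lemma finite_E: "finite E"
proof -
  have "E \<subseteq> Pow V" using simple by (auto simp: simple_graph_def)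
  then show ?thesis
    using simple by (auto simp: simple_graph_def intro: finite_subset)
qed

lemma T_subset_E: "T \<subseteq> E" and acyclic_T: "\<not> has_cycle T" and connected_T: "connected_graph V T"
  using normal by (auto simp: normal_spanning_tree_def spanning_tree_def)

lemma fcycle_conv_path:
  assumes e: "e \<in> E - T"
  obtains p where "is_path T p" "length p \<ge> 2" "e = {hd p, last p}"
    "fcycle T e = insert e (path_edges p)"
proof -
  define P where "P = (\<lambda>(x, y). e = {x, y} \<and> x \<noteq> y)"
  obtain x y where xy: "(SOME xy. P xy) = (x, y)" by (cases "SOME xy. P xy") auto
  from e have "e \<in> E" by simp
  then obtain x' y' where e': "e = {x', y'}" "x' \<noteq> y'" "x' \<in> V" "y' \<in> V"
    by (rule edgeE)
  then have "\<exists>xy. P xy" unfolding P_def by blast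
  from someI_ex[OF this] have "P (x, y)" unfolding xy .
  then have exy: "e = {x, y}" "x \<noteq> y" by (simp_all add: P_def)
  have "fcycle T e = (case SOME xy. P xy of (x, y) \<Rightarrow> insert e (path_edges (tpath T x y)))"
    by (simp only: fcycle_def P_def)
  also have "\<dots> = insert e (path_edges (tpath T x y))"
    by (simp only: xy prod.case)
  finally have fc: "fcycle T e = insert e (path_edges (tpath T x y))" .
  have "e \<subseteq> V" using e' by simp
  then have "{x, y} \<subseteq> V" using exy by simp
  then obtain p where p: "is_path T p" "hd p = x" "last p = y"
    using connected_T unfolding connected_graph_def by blast
  then have "tpath T x y = p" using tpath_eq[OF acyclic_T p(1)] by simp
  moreover have "length p \<ge> 2"
    using p exy by (cases p rule: remdups_adj.cases) (auto simp: is_path_def)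
  ultimately show thesis
    using p exy fc by (intro that[of p]) simp_all
qed

context
  fixes e assumes e: "e \<in> E - T"
begin

lemma fcycle_subset_E: "fcycle T e \<subseteq> E"
  using T_subset_E e path_edges_subset
  by (cases rule: fcycle_conv_path[OF e]) (auto simp: is_path_iff_walk)

lemma finite_fcycle: "finite (fcycle T e)"
  by (cases rule: fcycle_conv_path[OF e]) simp

lemma fcycle_Int_T: "fcycle T e \<inter> T = fcycle T e - {e}"
  using e path_edges_subset
  by (cases rule: fcycle_conv_path[OF e]) (auto simp: is_path_iff_walk)

lemma fcycle_Diff_T: "fcycle T e - T = {e}"
  using e path_edges_subset
  by (cases rule: fcycle_conv_path[OF e]) (auto simp: is_path_iff_walk)

lemma fcycle_Int_T_nonempty: "fcycle T e \<inter> T \<noteq> {}"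
  using e path_edges_subset path_edges_nonempty
  by (cases rule: fcycle_conv_path[OF e]) (fastforce simp: is_path_iff_walk)

lemma card_fcycle_ge_2: "card (fcycle T e) \<ge> 2"
proof (cases rule: fcycle_conv_path[OF e])
  case (1 p)
  then have "e \<notin> path_edges p"
    using e path_edges_subset by (auto simp: is_path_iff_walk)
  then have "card (fcycle T e) = Suc (card (path_edges p))"
    unfolding 1(4) by simp
  moreover have "card (path_edges p) \<ge> 1"
    using path_edges_nonempty[OF 1(2)] by (simp add: Suc_le_eq card_gt_0_iff)
  ultimately show ?thesis by simp
qed

lemma two_regular_fcycle: "two_regular (fcycle T e)"
proof (cases rule: fcycle_conv_path[OF e])
  case (1 p)
  then have "e \<notin> path_edges p"
    using e path_edges_subset by (auto simp: is_path_iff_walk)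
  then have "two_regular (insert {hd p, last p} (path_edges p))"
    using 1(1,2,3) by (intro two_regular_cycle) (simp_all add: is_path_def)
  then show ?thesis
    unfolding 1(4) using 1(3) by simp
qed

lemma is_tree_edges_fcycle_Int_T: "is_tree_edges (fcycle T e \<inter> T)"
proof (cases rule: fcycle_conv_path[OF e])
  case (1 p)
  have pT: "path_edges p \<subseteq> T"
    using 1(1) path_edges_subset by (auto simp: is_path_iff_walk)
  then have "fcycle T e \<inter> T = path_edges p"
    unfolding 1(4) using e by auto
  moreover have "\<not> has_cycle (path_edges p)"
    using acyclic_T has_cycle_mono pT by blast
  moreover have "linked (path_edges p) x y" if "x \<in> \<Union>(path_edges p)" "y \<in> \<Union>(path_edges p)" for x y
    using that Union_path_edges_subset[of p] is_walk_path_edges[of p] linked_if_walk[of _ p x y]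
    by blast
  ultimately show ?thesis
    unfolding is_tree_edges_iff by simp
qed

end

lemma nontree_edge_notin_fcycle: "e \<in> E - T \<Longrightarrow> e' \<in> E - T \<Longrightarrow> e' \<noteq> e \<Longrightarrow> e' \<notin> fcycle T e"
  using fcycle_Diff_T by blast

lemma nontree_edge_in_fcycle: "e \<in> E - T \<Longrightarrow> e \<in> fcycle T e"
  using fcycle_Diff_T by blast

lemma admissible_coll_Un:
  assumes "admissible_coll E T S1" "admissible_coll E T S2"
    and "z \<in> \<Union>(cyc_sum T S1 \<inter> T)" "z \<in> \<Union>(cyc_sum T S2 \<inter> T)"
  shows "admissible_coll E T (S1 \<union> S2)"
proof -
  have "cyc_sum T (S1 \<union> S2) \<inter> T = (cyc_sum T S1 \<inter> T) \<union> (cyc_sum T S2 \<inter> T)"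
    by (auto simp: cyc_sum_def)
  moreover have "is_tree_edges ((cyc_sum T S1 \<inter> T) \<union> (cyc_sum T S2 \<inter> T))"
  proof (rule is_tree_edges_Un[where z = z])
    show "\<not> has_cycle ((cyc_sum T S1 \<inter> T) \<union> (cyc_sum T S2 \<inter> T))"
      using acyclic_T has_cycle_mono by blast
  qed (use assms in \<open>auto simp: admissible_coll_def\<close>)
  ultimately show ?thesis
    using assms unfolding admissible_coll_def by auto
qed

lemma fundamental_coll_exists:
  assumes e: "e \<in> E - T"
  obtains S where "fundamental_coll E T S" "e \<in> S"
proof -
  let ?A = "{S. admissible_coll E T S \<and> e \<in> S}"
  have "finite ?A"
    by (rule finite_subset[of _ "Pow (E - T)"]) (use finite_E in \<open>auto simp: admissible_coll_def\<close>)
  moreover have "{e} \<in> ?A"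
    using e is_tree_edges_fcycle_Int_T by (simp add: admissible_coll_def cyc_sum_def)
  ultimately obtain S where "S \<in> ?A" "\<forall>S'\<in>?A. S \<subseteq> S' \<longrightarrow> S = S'"
    using finite_has_maximal2 by (metis (no_types, lifting))
  then show thesis
    using that unfolding fundamental_coll_def by blast
qed

lemma fundamental_coll_eq:
  assumes S1: "fundamental_coll E T S1" and S2: "fundamental_coll E T S2"
    and f: "f \<in> cyc_sum T S1" "f \<in> cyc_sum T S2"
  shows "S1 = S2"
proof -
  have sub: "S1 \<subseteq> E - T" "S2 \<subseteq> E - T"
    using S1 S2 by (auto simp: fundamental_coll_def admissible_coll_def)
  obtain g where g: "g \<in> cyc_sum T S1 \<inter> T" "g \<in> cyc_sum T S2 \<inter> T"
  proof (cases "f \<in> T")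
    case False
    obtain e1 e2 where "e1 \<in> S1" "e2 \<in> S2" "f \<in> fcycle T e1" "f \<in> fcycle T e2"
      using f by (auto simp: cyc_sum_def)
    with False sub have "f = e1" "f = e2"
      using fcycle_Diff_T by blast+
    then obtain g where "g \<in> fcycle T e1 \<inter> T"
      using fcycle_Int_T_nonempty \<open>e1 \<in> S1\<close> sub by blast
    then show thesis
      using that \<open>e1 \<in> S1\<close> \<open>e2 \<in> S2\<close> \<open>f = e1\<close> \<open>f = e2\<close> by (auto simp: cyc_sum_def)
  qed (use f that in blast)
  obtain z where "z \<in> g"
    using g T_subset_E by (auto elim: edgeE)
  then have "admissible_coll E T (S1 \<union> S2)"
    using S1 S2 g admissible_coll_Un unfolding fundamental_coll_def by blast
  then show ?thesis
    using S1 S2 unfolding fundamental_coll_def by blast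
qed

lemma orient_edge:
  assumes "f \<in> E"
  obtains a b where "orient T r f = (a, b)" "f = {a, b}" "a \<noteq> b"
proof -
  define Q where "Q = (\<lambda>(s, t). f = {s, t} \<and> s \<noteq> t \<and> tree_le T r s t)"
  obtain x y where xy: "f = {x, y}" "x \<noteq> y"
    using assms by (elim edgeE)
  then have "Q (x, y) \<or> Q (y, x)"
    using assms normal unfolding Q_def normal_spanning_tree_def by (auto simp: insert_commute)
  then have "\<exists>st. Q st" by blast
  then obtain s t where st: "(SOME st. Q st) = (s, t)" "Q (s, t)"
    by (metis old.prod.exhaust someI_ex)
  then have orient: "orient T r f = (if f \<in> T then (s, t) else (t, s))"
    unfolding orient_def Q_def by simp
  have "f = {s, t}" "s \<noteq> t" using st(2) by (simp_all add: Q_def)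
  then show thesis
    using orient by (cases "f \<in> T") (simp_all add: that insert_commute)
qed

end

lemma cis_add_2pi_multiple: "cis (x + 2 * pi * of_int k) = cis x"
  by (simp flip: cis_mult)

lemma cis_principal_angle:
  obtains u where "- pi < u" "u \<le> pi" "cis u = cis t"
proof
  have "cis t \<noteq> 0" by (metis norm_cis norm_zero zero_neq_one)
  then show "cis (Arg (cis t)) = cis t" by (simp add: cis_Arg)
qed (use Arg_bounded in auto)

lemma cis_sum_of_two_right_angles:
  obtains a b where "\<bar>a\<bar> \<le> pi / 2" "\<bar>b\<bar> \<le> pi / 2" "cis (a + b) = cis t"
proof -
  obtain u where "- pi < u" "u \<le> pi" "cis u = cis t"
    by (rule cis_principal_angle)
  then show thesis
    by (intro that[of "u / 2" "u / 2"]) auto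
qed

text \<open>Casework on the position of the two points on the circle: a suitable \<open>a\<close> is either
  on the shorter arc between them or an endpoint \<open>\<plusminus>pi/2\<close> of the right half circle.\<close>
lemma right_angle_near_two_principal_angles:
  assumes "- pi < u" "u \<le> v" "v \<le> pi"
  shows "\<exists>a j1 j2. \<bar>a\<bar> \<le> pi / 2 \<and>
    \<bar>u - 2 * pi * of_int j1 - a\<bar> + \<bar>v - 2 * pi * of_int j2 - a\<bar> \<le> pi"
proof -
  have "pi > 0" by (rule pi_gt_zero)
  consider "v - u \<le> pi" "u \<le> pi / 2" "v \<ge> - (pi / 2)" | "v - u \<le> pi" "u > pi / 2"
    | "v - u \<le> pi" "v < - (pi / 2)" | "v - u > pi" "v \<le> pi / 2"
    | "v - u > pi" "v > pi / 2" "u \<ge> - (pi / 2)"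
    | "v - u > pi" "v > pi / 2" "u < - (pi / 2)" "u + v \<le> 0"
    | "v - u > pi" "v > pi / 2" "u < - (pi / 2)" "u + v > 0"
    by linarith
  then show ?thesis
  proof cases
    case 1
    show ?thesis
      by (rule exI[of _ "max u (- (pi / 2))"], rule exI[of _ 0], rule exI[of _ 0])
         (use 1 assms \<open>pi > 0\<close> in \<open>auto simp: abs_if max_def\<close>)
  next
    case 2
    show ?thesis
      by (rule exI[of _ "pi / 2"], rule exI[of _ 0], rule exI[of _ 0])
         (use 2 assms \<open>pi > 0\<close> in \<open>auto simp: abs_if\<close>)
  next
    case 3
    show ?thesis
      by (rule exI[of _ "- (pi / 2)"], rule exI[of _ 0], rule exI[of _ 0])
         (use 3 assms \<open>pi > 0\<close> in \<open>auto simp: abs_if\<close>)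
  next
    case 4
    show ?thesis
      by (rule exI[of _ "max v (- (pi / 2))"], rule exI[of _ "-1"], rule exI[of _ 0])
         (use 4 assms \<open>pi > 0\<close> in \<open>auto simp: abs_if max_def\<close>)
  next
    case 5
    show ?thesis
      by (rule exI[of _ "- (pi / 2)"], rule exI[of _ 0], rule exI[of _ 1])
         (use 5 assms \<open>pi > 0\<close> in \<open>auto simp: abs_if\<close>)
  next
    case 6
    show ?thesis
      by (rule exI[of _ "pi / 2"], rule exI[of _ "-1"], rule exI[of _ 0])
         (use 6 assms \<open>pi > 0\<close> in \<open>auto simp: abs_if\<close>)
  next
    case 7
    show ?thesis
      by (rule exI[of _ "- (pi / 2)"], rule exI[of _ 0], rule exI[of _ 1])
         (use 7 assms \<open>pi > 0\<close> in \<open>auto simp: abs_if\<close>)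
  qed
qed

lemma right_angle_near_two_angles:
  obtains a x1 x2 where "\<bar>a\<bar> \<le> pi / 2" "\<bar>x1\<bar> + \<bar>x2\<bar> \<le> pi"
    "cis (a + x1) = cis c1" "cis (a + x2) = cis c2"
proof -
  obtain u where u: "- pi < u" "u \<le> pi" "cis u = cis c1" by (rule cis_principal_angle)
  obtain v where v: "- pi < v" "v \<le> pi" "cis v = cis c2" by (rule cis_principal_angle)
  have *: "cis (a + (u - 2 * pi * of_int j1 - a)) = cis u"
    "cis (a + (v - 2 * pi * of_int j2 - a)) = cis v" for a j1 j2
    using cis_add_2pi_multiple[of u "- j1"] cis_add_2pi_multiple[of v "- j2"] by simp_all
  show thesis
  proof (cases "u \<le> v")
    case True
    then obtain a j1 j2 where "\<bar>a\<bar> \<le> pi / 2"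
      "\<bar>u - 2 * pi * of_int j1 - a\<bar> + \<bar>v - 2 * pi * of_int j2 - a\<bar> \<le> pi"
      using right_angle_near_two_principal_angles u v by blast
    then show thesis using that * u(3) v(3) by metis
  next
    case False
    then obtain a j1 j2 where "\<bar>a\<bar> \<le> pi / 2"
      "\<bar>v - 2 * pi * of_int j2 - a\<bar> + \<bar>u - 2 * pi * of_int j1 - a\<bar> \<le> pi"
      using right_angle_near_two_principal_angles[of v u] u v by auto
    then show thesis using that * u(3) v(3) by (metis add.commute)
  qed
qed

text \<open>Angles for three cycles through the six edge classes of a theta graph (or of a
  subdivided \<open>K\<^sub>4\<close>): \<open>y\<^sub>i\<close> lies on the \<open>i\<close>-th cycle only, \<open>c\<close> on the first and third, \<open>b\<close> on
  the second and third, \<open>a\<close> on the first two and, if \<open>d = 1\<close>, also on the third.\<close>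
lemma theta_angles:
  fixes d :: real
  obtains a b c y1 y2 y3 where
    "\<bar>a\<bar> \<le> pi / 2" "\<bar>b\<bar> \<le> pi / 2" "\<bar>c\<bar> \<le> pi / 2"
    "\<bar>y1\<bar> \<le> pi / 2" "\<bar>y2\<bar> \<le> pi / 2" "\<bar>y3\<bar> \<le> pi / 2"
    "cis (a + c + y1) = cis c1" "cis (a + b + y2) = cis c2" "cis (d * a + b + c + y3) = cis c3"
proof -
  obtain a x1 x2 where a: "\<bar>a\<bar> \<le> pi / 2" "\<bar>x1\<bar> + \<bar>x2\<bar> \<le> pi"
    "cis (a + x1) = cis c1" "cis (a + x2) = cis c2"
    by (rule right_angle_near_two_angles)
  text \<open>\<open>c\<close> and \<open>x\<^sub>1 - c\<close> are right angles iff \<open>c \<in> [lo\<^sub>1, hi\<^sub>1]\<close>, an interval of length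
    \<open>pi - \<bar>x\<^sub>1\<bar>\<close>; likewise for \<open>b\<close>. So \<open>b + c\<close> ranges over an interval of length at least
    \<open>pi\<close>, and a last right angle \<open>y\<^sub>3\<close> covers the rest of the circle.\<close>
  define lo1 where "lo1 = max (- (pi / 2)) (x1 - pi / 2)"
  define hi1 where "hi1 = min (pi / 2) (x1 + pi / 2)"
  define lo2 where "lo2 = max (- (pi / 2)) (x2 - pi / 2)"
  define hi2 where "hi2 = min (pi / 2) (x2 + pi / 2)"
  have len: "hi1 - lo1 = pi - \<bar>x1\<bar>" "hi2 - lo2 = pi - \<bar>x2\<bar>"
    using a(2) by (auto simp: lo1_def hi1_def lo2_def hi2_def max_def min_def abs_if)
  obtain \<sigma> y3 where \<sigma>: "\<bar>\<sigma>\<bar> \<le> pi / 2" "\<bar>y3\<bar> \<le> pi / 2"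
    "cis (\<sigma> + y3) = cis (c3 - d * a - (lo1 + lo2 + pi / 2))"
    by (rule cis_sum_of_two_right_angles)
  define s where "s = lo1 + lo2 + pi / 2 + \<sigma>"
  define c where "c = max lo1 (s - hi2)"
  define b where "b = s - c"
  have cb: "lo1 \<le> c" "c \<le> hi1" "lo2 \<le> b" "b \<le> hi2"
    using \<sigma>(1) len a(2) by (auto simp: c_def b_def s_def max_def)
  have "cis (d * a + b + c + y3) = cis ((\<sigma> + y3) + (d * a + (lo1 + lo2 + pi / 2)))"
    by (rule arg_cong[where f = cis]) (simp add: b_def s_def)
  also have "\<dots> = cis (\<sigma> + y3) * cis (d * a + (lo1 + lo2 + pi / 2))"
    by (rule cis_mult[symmetric])
  also have "\<dots> = cis c3"
    by (simp only: \<sigma>(3) cis_mult) simp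
  finally have "cis (d * a + b + c + y3) = cis c3" .
  moreover have "a + c + (x1 - c) = a + x1" "a + b + (x2 - b) = a + x2" by simp_all
  moreover have "\<bar>c\<bar> \<le> pi / 2" "\<bar>x1 - c\<bar> \<le> pi / 2" "\<bar>b\<bar> \<le> pi / 2" "\<bar>x2 - b\<bar> \<le> pi / 2"
    using cb by (auto simp: lo1_def hi1_def lo2_def hi2_def abs_if)
  ultimately show thesis
    using that[of a b c "x1 - c" "x2 - b" y3] a \<sigma>(2) by simp
qed

text \<open>Each new cycle has two edges not yet assigned; their two right angles can realise
  any prescribed gain, whatever the angles already fixed on the cycle.\<close>
lemma angles_extend_by_two_new_edges:
  fixes C :: "'k \<Rightarrow> 'e set" and c :: "'k \<Rightarrow> real"
  assumes "\<forall>i<length ks. card (C (ks ! i) - (B \<union> \<Union>(C ` set (take i ks)))) > 1"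
    and "\<forall>k\<in>set ks. finite (C k)" and "\<forall>f. \<bar>\<alpha>\<^sub>0 f\<bar> \<le> pi / 2"
  shows "\<exists>\<alpha>. (\<forall>f. \<bar>\<alpha> f\<bar> \<le> pi / 2) \<and> (\<forall>f\<in>B. \<alpha> f = \<alpha>\<^sub>0 f) \<and>
    (\<forall>k\<in>set ks. cis (\<Sum>f\<in>C k. \<alpha> f) = cis (c k))"
  using assms
proof (induction ks arbitrary: B \<alpha>\<^sub>0)
  case Nil
  then show ?case by auto
next
  case (Cons k ks)
  have "card (C k - B) > 1" using Cons.prems(1)[rule_format, of 0] by simp
  then obtain f1 D where D: "C k - B = insert f1 D" "f1 \<notin> D" "card D \<ge> 1"
    using card_le_Suc_iff[of 1 "C k - B"] by (auto simp: Suc_le_eq)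
  then have "D \<noteq> {}" by auto
  then obtain f2 where "f2 \<in> D" by blast
  then have f: "f1 \<in> C k - B" "f2 \<in> C k - B" "f1 \<noteq> f2"
    using D by auto
  have fin: "finite (C k)" using Cons.prems(2) by simp
  define S0 where "S0 = (\<Sum>f\<in>C k \<inter> B. \<alpha>\<^sub>0 f)"
  obtain a1 a2 where a: "\<bar>a1\<bar> \<le> pi / 2" "\<bar>a2\<bar> \<le> pi / 2" "cis (a1 + a2) = cis (c k - S0)"
    by (rule cis_sum_of_two_right_angles)
  define \<alpha>\<^sub>1 where "\<alpha>\<^sub>1 f = (if f \<in> B then \<alpha>\<^sub>0 f else if f = f1 then a1 else if f = f2 then a2
                   else if f \<in> C k then 0 else \<alpha>\<^sub>0 f)" for f
  have "\<forall>f. \<bar>\<alpha>\<^sub>1 f\<bar> \<le> pi / 2" using Cons.prems(3) a by (simp add: \<alpha>\<^sub>1_def)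
  moreover have "\<forall>i<length ks. card (C (ks ! i) - ((B \<union> C k) \<union> \<Union>(C ` set (take i ks)))) > 1"
  proof (intro allI impI)
    fix i assume "i < length ks"
    then show "card (C (ks ! i) - ((B \<union> C k) \<union> \<Union>(C ` set (take i ks)))) > 1"
      using Cons.prems(1)[rule_format, of "Suc i"] by (simp add: Un_assoc)
  qed
  moreover have "\<forall>k\<in>set ks. finite (C k)" using Cons.prems(2) by simp
  ultimately have "\<exists>\<alpha>. (\<forall>f. \<bar>\<alpha> f\<bar> \<le> pi / 2) \<and> (\<forall>f\<in>B \<union> C k. \<alpha> f = \<alpha>\<^sub>1 f) \<and>
      (\<forall>k\<in>set ks. cis (\<Sum>f\<in>C k. \<alpha> f) = cis (c k))"
    using Cons.IH by blast
  then obtain \<alpha> where \<alpha>: "\<forall>f. \<bar>\<alpha> f\<bar> \<le> pi / 2" "\<forall>f\<in>B \<union> C k. \<alpha> f = \<alpha>\<^sub>1 f"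
      "\<forall>k\<in>set ks. cis (\<Sum>f\<in>C k. \<alpha> f) = cis (c k)"
    by blast
  have "(\<Sum>f\<in>C k. \<alpha> f) = (\<Sum>f\<in>C k. \<alpha>\<^sub>1 f)"
    using \<alpha>(2) by (intro sum.cong) auto
  also have "\<dots> = (\<Sum>f\<in>C k \<inter> B. \<alpha>\<^sub>1 f) + (\<Sum>f\<in>C k - B. \<alpha>\<^sub>1 f)"
    by (rule sum.Int_Diff[OF fin])
  also have "(\<Sum>f\<in>C k \<inter> B. \<alpha>\<^sub>1 f) = S0"
    unfolding S0_def by (intro sum.cong) (auto simp: \<alpha>\<^sub>1_def)
  also have "(\<Sum>f\<in>C k - B. \<alpha>\<^sub>1 f) = (\<Sum>f\<in>{f1, f2}. \<alpha>\<^sub>1 f)"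
    using f fin by (intro sum.mono_neutral_right) (auto simp: \<alpha>\<^sub>1_def)
  also have "\<dots> = a1 + a2"
    using f by (simp add: \<alpha>\<^sub>1_def)
  finally have "cis (\<Sum>f\<in>C k. \<alpha> f) = cis S0 * cis (a1 + a2)"
    by (simp add: cis_mult)
  also have "\<dots> = cis (c k)"
    using a(3) by (simp add: cis_mult)
  finally have "cis (\<Sum>f\<in>C k. \<alpha> f) = cis (c k)" .
  then show ?case
    using \<alpha> by (intro exI[of _ \<alpha>]) (auto simp: \<alpha>\<^sub>1_def)
qed

definition venn_classes :: "'e set \<Rightarrow> 'e set \<Rightarrow> 'e set \<Rightarrow> 'e set \<Rightarrow> (bool \<times> bool \<times> bool) set" where
  "venn_classes H C1 C2 C3 = (\<lambda>f. (f \<in> C1, f \<in> C2, f \<in> C3)) ` H"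

lemma K4'_simple: "K4' H \<Longrightarrow> finite H \<and> (\<forall>f\<in>H. \<exists>a b. a \<noteq> b \<and> f = {a, b})"
proof (induction rule: K4'.induct)
  case (subdiv H x y z)
  have "x \<noteq> y"
    using subdiv by (metis doubleton_eq_iff insert_absorb2)
  moreover have "z \<noteq> x" "z \<noteq> y" using subdiv(2,3) by auto
  ultimately show ?case using subdiv by auto
qed auto

lemma card_filter_three_in_0_2_iff:
  assumes "distinct [p, q, r]"
  shows "card {f \<in> {p, q, r}. P f} \<in> {0, 2} \<longleftrightarrow> (P p \<longleftrightarrow> (P q \<longleftrightarrow> \<not> P r))"
proof -
  have eq: "{f \<in> {p, q, r}. P f} =
      (if P p then {p} else {}) \<union> (if P q then {q} else {}) \<union> (if P r then {r} else {})"
    by auto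
  show ?thesis
    unfolding eq using assms by (cases "P p"; cases "P q"; cases "P r") auto
qed

lemma card_filter_two_in_0_2_iff:
  assumes "p \<noteq> q"
  shows "card {f \<in> {p, q}. P f} \<in> {0, 2} \<longleftrightarrow> (P p \<longleftrightarrow> P q)"
proof -
  have eq: "{f \<in> {p, q}. P f} = (if P p then {p} else {}) \<union> (if P q then {q} else {})"
    by auto
  show ?thesis
    unfolding eq using assms by (cases "P p"; cases "P q") auto
qed

lemma two_regular_parity:
  assumes "two_regular C" "C \<subseteq> H" "\<forall>f\<in>H. v \<in> f \<longleftrightarrow> f \<in> {p, q, r}" "distinct [p, q, r]"
  shows "p \<in> C \<longleftrightarrow> (q \<in> C \<longleftrightarrow> r \<notin> C)"
proof -
  have "{f \<in> C. v \<in> f} = {f \<in> {p, q, r}. f \<in> C}"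
    using assms(2,3) by blast
  then have "degree C v = card {f \<in> {p, q, r}. f \<in> C}"
    unfolding degree_def by (simp only:)
  then have "card {f \<in> {p, q, r}. f \<in> C} \<in> {0, 2}"
    using assms(1) unfolding two_regular_def by metis
  then show ?thesis
    using card_filter_three_in_0_2_iff[OF assms(4), of "\<lambda>f. f \<in> C"] by simp
qed

lemma K4_venn_classes:
  assumes d: "distinct [a, b, c, d]"
    and H: "H = {{a, b}, {a, c}, {a, d}, {b, c}, {b, d}, {c, d}}" "H = C1 \<union> C2 \<union> C3"
    and C: "two_regular C1" "two_regular C2" "two_regular C3"
    and singles: "{(True, False, False), (False, True, False), (False, False, True)}
      \<subseteq> venn_classes H C1 C2 C3"
  shows "{(True, True, False), (True, False, True), (False, True, True)} \<subseteq> venn_classes H C1 C2 C3 \<or>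
    {(True, True, True), (True, False, True), (False, True, True)} \<subseteq> venn_classes H C1 C2 C3 \<or>
    {(True, True, True), (True, True, False), (False, True, True)} \<subseteq> venn_classes H C1 C2 C3 \<or>
    {(True, True, True), (True, True, False), (True, False, True)} \<subseteq> venn_classes H C1 C2 C3"
proof -
  have at: "\<forall>f\<in>H. a \<in> f \<longleftrightarrow> f \<in> {{a, b}, {a, c}, {a, d}}"
    "\<forall>f\<in>H. b \<in> f \<longleftrightarrow> f \<in> {{a, b}, {b, c}, {b, d}}"
    "\<forall>f\<in>H. c \<in> f \<longleftrightarrow> f \<in> {{a, c}, {b, c}, {c, d}}"
    "\<forall>f\<in>H. d \<in> f \<longleftrightarrow> f \<in> {{a, d}, {b, d}, {c, d}}"
    using d unfolding H(1) by (simp_all add: doubleton_eq_iff, blast+)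
  have dist: "distinct [{a, b}, {a, c}, {a, d}]" "distinct [{a, b}, {b, c}, {b, d}]"
    "distinct [{a, c}, {b, c}, {c, d}]" "distinct [{a, d}, {b, d}, {c, d}]"
    using d by (auto simp: doubleton_eq_iff)
  have parity: "({a, b} \<in> C \<longleftrightarrow> ({a, c} \<in> C \<longleftrightarrow> {a, d} \<notin> C)) \<and>
      ({a, b} \<in> C \<longleftrightarrow> ({b, c} \<in> C \<longleftrightarrow> {b, d} \<notin> C)) \<and>
      ({a, c} \<in> C \<longleftrightarrow> ({b, c} \<in> C \<longleftrightarrow> {c, d} \<notin> C)) \<and>
      ({a, d} \<in> C \<longleftrightarrow> ({b, d} \<in> C \<longleftrightarrow> {c, d} \<notin> C))"
    if "two_regular C" "C \<subseteq> H" for C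
    using two_regular_parity[OF that at(1) dist(1)] two_regular_parity[OF that at(2) dist(2)]
      two_regular_parity[OF that at(3) dist(3)] two_regular_parity[OF that at(4) dist(4)]
    by blast
  have "C1 \<subseteq> H" "C2 \<subseteq> H" "C3 \<subseteq> H" using H(2) by auto
  note p = parity[OF C(1) this(1)] parity[OF C(2) this(2)] parity[OF C(3) this(3)]
  have cover: "\<forall>f\<in>H. f \<in> C1 \<or> f \<in> C2 \<or> f \<in> C3" using H(2) by auto
  show ?thesis
    using p cover singles unfolding venn_classes_def H(1) by simp argo
qed

definition unsubdivide :: "'a \<Rightarrow> 'a \<Rightarrow> 'a \<Rightarrow> 'a set set \<Rightarrow> 'a set set" where
  "unsubdivide x y z C = (C - {{x, z}, {z, y}}) \<union> (if {x, z} \<in> C then {{x, y}} else {})"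

context
  fixes H :: "'a set set" and x y z :: 'a and C :: "'a set set"
  assumes H: "finite H" "{x, y} \<in> H" "z \<notin> \<Union>H" "x \<noteq> y"
    and C: "C \<subseteq> (H - {{x, y}}) \<union> {{x, z}, {z, y}}" "two_regular C"
begin

lemma subdivided_edge_both_halves: "{x, z} \<in> C \<longleftrightarrow> {z, y} \<in> C"
proof -
  have "{f \<in> C. z \<in> f} = {f \<in> {{x, z}, {z, y}}. f \<in> C}"
    using C(1) H(3) by blast
  then have "degree C z = card {f \<in> {{x, z}, {z, y}}. f \<in> C}"
    unfolding degree_def by (simp only:)
  then have "card {f \<in> {{x, z}, {z, y}}. f \<in> C} \<in> {0, 2}"
    using C(2) unfolding two_regular_def by metis
  moreover have "{x, z} \<noteq> {z, y}" using H by (auto simp: doubleton_eq_iff)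
  ultimately show ?thesis
    using card_filter_two_in_0_2_iff[of "{x, z}" "{z, y}" "\<lambda>f. f \<in> C"] by simp
qed

lemma unsubdivide_subset: "unsubdivide x y z C \<subseteq> H"
  using C(1) H(2) by (auto simp: unsubdivide_def)

lemma mem_unsubdivide_iff:
  "f \<in> H \<Longrightarrow> f \<in> unsubdivide x y z C \<longleftrightarrow> (if f = {x, y} then {x, z} \<in> C else f \<in> C)"
  using C(1) H(3,4) by (auto simp: unsubdivide_def)

lemma degree_unsubdivide:
  assumes "v \<noteq> z"
  shows "degree (unsubdivide x y z C) v = degree C v"
proof (cases "{x, z} \<in> C")
  case False
  then have "unsubdivide x y z C = C"
    using subdivided_edge_both_halves by (auto simp: unsubdivide_def)
  then show ?thesis by simp
next
  case True
  then have zy: "{z, y} \<in> C" using subdivided_edge_both_halves by simp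
  have xz: "z \<noteq> x" "z \<noteq> y" using H by auto
  have xy: "{x, y} \<notin> C" using C(1) xz by (auto simp: doubleton_eq_iff)
  have "finite C"
    using C(1) H(1) by (meson finite.emptyI finite.insertI finite_Diff finite_UnI finite_subset)
  then have fin: "finite {f \<in> C. v \<in> f}" by simp
  have card_swap: "card (insert {x, y} ({f \<in> C. v \<in> f} - {g})) = card {f \<in> C. v \<in> f}"
    if "g \<in> C" "v \<in> g" for g
  proof -
    have "g \<in> {f \<in> C. v \<in> f}" using that by simp
    have "card (insert {x, y} ({f \<in> C. v \<in> f} - {g})) = Suc (card ({f \<in> C. v \<in> f} - {g}))"
      using fin xy by (simp add: card_insert_disjoint)
    also have "\<dots> = card {f \<in> C. v \<in> f}"
      by (rule card.remove[OF fin \<open>g \<in> {f \<in> C. v \<in> f}\<close>, symmetric])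
    finally show ?thesis .
  qed
  consider "v = x" | "v = y" | "v \<noteq> x" "v \<noteq> y" by blast
  then show ?thesis
  proof cases
    case 1
    then have "{f \<in> unsubdivide x y z C. v \<in> f} = insert {x, y} ({f \<in> C. v \<in> f} - {{x, z}})"
      using True xz H(4) by (auto simp: unsubdivide_def)
    then show ?thesis using card_swap[of "{x, z}"] True 1 by (simp add: degree_def)
  next
    case 2
    then have "{f \<in> unsubdivide x y z C. v \<in> f} = insert {x, y} ({f \<in> C. v \<in> f} - {{z, y}})"
      using True xz H(4) by (auto simp: unsubdivide_def)
    then show ?thesis using card_swap[of "{z, y}"] zy 2 by (simp add: degree_def)
  next
    case 3
    then have "{f \<in> unsubdivide x y z C. v \<in> f} = {f \<in> C. v \<in> f}"
      using True assms by (auto simp: unsubdivide_def)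
    then show ?thesis by (simp add: degree_def)
  qed
qed

lemma two_regular_unsubdivide: "two_regular (unsubdivide x y z C)"
  unfolding two_regular_def
proof
  fix v
  show "degree (unsubdivide x y z C) v \<in> {0, 2}"
  proof (cases "v = z")
    case True
    then have "{f \<in> unsubdivide x y z C. v \<in> f} = {}"
      using unsubdivide_subset H(3) by auto
    then have "degree (unsubdivide x y z C) v = 0"
      unfolding degree_def by (simp only: card.empty)
    then show ?thesis by simp
  qed (use C(2) degree_unsubdivide in \<open>auto simp: two_regular_def\<close>)
qed

end

text \<open>Contracting a subdivided edge preserves which Venn classes of three cycles are
  inhabited, since both halves of the subdivided edge lie in the same class.\<close>
lemma K4'_venn_classes:
  assumes "K4' H" "H = C1 \<union> C2 \<union> C3" "two_regular C1" "two_regular C2" "two_regular C3"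
    and "{(True, False, False), (False, True, False), (False, False, True)}
      \<subseteq> venn_classes H C1 C2 C3"
  shows "{(True, True, False), (True, False, True), (False, True, True)} \<subseteq> venn_classes H C1 C2 C3 \<or>
    {(True, True, True), (True, False, True), (False, True, True)} \<subseteq> venn_classes H C1 C2 C3 \<or>
    {(True, True, True), (True, True, False), (False, True, True)} \<subseteq> venn_classes H C1 C2 C3 \<or>
    {(True, True, True), (True, True, False), (True, False, True)} \<subseteq> venn_classes H C1 C2 C3"
  using assms
proof (induction arbitrary: C1 C2 C3 rule: K4'.induct)
  case (base a b c d)
  show ?case by (rule K4_venn_classes[OF base.hyps refl base.prems])
next
  case (subdiv H x y z)
  let ?H' = "H - {{x, y}} \<union> {{x, z}, {z, y}}"
  have "finite H" using K4'_simple[OF subdiv(1)] by blast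
  have "\<exists>a b. a \<noteq> b \<and> {x, y} = {a, b}"
    using K4'_simple[OF subdiv(1)] subdiv(2) by blast
  then have "x \<noteq> y" by (auto simp: doubleton_eq_iff)
  note hyps = \<open>finite H\<close> subdiv(2,3) \<open>x \<noteq> y\<close>
  have sub: "C1 \<subseteq> ?H'" "C2 \<subseteq> ?H'" "C3 \<subseteq> ?H'" using subdiv.prems(1) by auto
  let ?D1 = "unsubdivide x y z C1" and ?D2 = "unsubdivide x y z C2"
    and ?D3 = "unsubdivide x y z C3"
  note mem1 = mem_unsubdivide_iff[OF hyps sub(1) subdiv.prems(2)]
    and mem2 = mem_unsubdivide_iff[OF hyps sub(2) subdiv.prems(3)]
    and mem3 = mem_unsubdivide_iff[OF hyps sub(3) subdiv.prems(4)]
  have halves: "{x, z} \<in> Ci \<longleftrightarrow> {z, y} \<in> Ci" if "Ci \<in> {C1, C2, C3}" for Ci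
    using that subdivided_edge_both_halves[OF hyps] sub subdiv.prems(2-4) by auto
  have "H = ?D1 \<union> ?D2 \<union> ?D3"
  proof
    show "?D1 \<union> ?D2 \<union> ?D3 \<subseteq> H"
      using unsubdivide_subset[OF hyps] sub subdiv.prems(2-4) by blast
    show "H \<subseteq> ?D1 \<union> ?D2 \<union> ?D3"
    proof
      fix f assume "f \<in> H"
      have "(if f = {x, y} then {x, z} else f) \<in> C1 \<union> C2 \<union> C3"
        using subdiv.prems(1) \<open>f \<in> H\<close> by auto
      then show "f \<in> ?D1 \<union> ?D2 \<union> ?D3"
        using mem1[OF \<open>f \<in> H\<close>] mem2[OF \<open>f \<in> H\<close>] mem3[OF \<open>f \<in> H\<close>] by (auto split: if_splits)
    qed
  qed
  moreover have venn: "venn_classes ?H' C1 C2 C3 = venn_classes H ?D1 ?D2 ?D3"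
  proof -
    define g where "g f = (f \<in> C1, f \<in> C2, f \<in> C3)" for f
    define g' where "g' f = (f \<in> ?D1, f \<in> ?D2, f \<in> ?D3)" for f
    have "g ` (H - {{x, y}}) = g' ` (H - {{x, y}})"
      by (rule image_cong) (auto simp: g_def g'_def mem1 mem2 mem3)
    moreover have "g ` {{x, z}, {z, y}} = {g' {x, y}}"
      using halves subdiv(2) by (auto simp: g_def g'_def mem1 mem2 mem3)
    ultimately have "g ` ?H' = g' ` (insert {x, y} (H - {{x, y}}))"
      by (simp only: image_Un image_insert) auto
    also have "insert {x, y} (H - {{x, y}}) = H" using subdiv(2) by auto
    finally show ?thesis unfolding venn_classes_def g_def g'_def .
  qed
  ultimately show ?case
    unfolding venn
    using subdiv.IH two_regular_unsubdivide[OF hyps sub(1) subdiv.prems(2)]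
      two_regular_unsubdivide[OF hyps sub(2) subdiv.prems(3)]
      two_regular_unsubdivide[OF hyps sub(3) subdiv.prems(4)] subdiv.prems(5)[unfolded venn]
    by blast
qed

lemma theta_pattern_angles:
  assumes fin: "finite C1" "finite C2" "finite C3"
    and t: "t \<in> C1" "t \<in> C2"
    and u: "u \<notin> C1" "u \<in> C2" "u \<in> C3"
    and w: "w \<in> C1" "w \<notin> C2" "w \<in> C3"
    and e: "e1 \<in> C1" "e1 \<notin> C2" "e1 \<notin> C3" "e2 \<notin> C1" "e2 \<in> C2" "e2 \<notin> C3"
      "e3 \<notin> C1" "e3 \<notin> C2" "e3 \<in> C3"
  shows "\<exists>\<alpha>. (\<forall>f. \<bar>\<alpha> f\<bar> \<le> pi / 2) \<and> cis (\<Sum>f\<in>C1. \<alpha> f) = cis c1 \<and>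
    cis (\<Sum>f\<in>C2. \<alpha> f) = cis c2 \<and> cis (\<Sum>f\<in>C3. \<alpha> f) = cis c3"
proof -
  obtain a b c y1 y2 y3 where bounds:
      "\<bar>a\<bar> \<le> pi / 2" "\<bar>b\<bar> \<le> pi / 2" "\<bar>c\<bar> \<le> pi / 2"
      "\<bar>y1\<bar> \<le> pi / 2" "\<bar>y2\<bar> \<le> pi / 2" "\<bar>y3\<bar> \<le> pi / 2"
    and sums: "cis (a + c + y1) = cis c1" "cis (a + b + y2) = cis c2"
      "cis (of_bool (t \<in> C3) * a + b + c + y3) = cis c3"
    by (rule theta_angles)
  have dist: "distinct [t, u, w, e1, e2, e3]"
    using t u w e by auto
  define \<alpha> where "\<alpha> f = (if f = t then a else 0) + (if f = u then b else 0) +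
    (if f = w then c else 0) + (if f = e1 then y1 else 0) + (if f = e2 then y2 else 0) +
    (if f = e3 then y3 else 0)" for f
  have "\<alpha> f \<in> {a, b, c, y1, y2, y3, 0}" for f
    using dist unfolding \<alpha>_def
    by (cases "f = t"; cases "f = u"; cases "f = w"; cases "f = e1"; cases "f = e2"; cases "f = e3")
      auto
  then have "\<bar>\<alpha> f\<bar> \<le> pi / 2" for f
    using bounds pi_gt_zero by (metis empty_iff insert_iff abs_zero less_eq_real_def half_gt_zero)
  moreover have sum_\<alpha>: "(\<Sum>f\<in>C. \<alpha> f) = (if t \<in> C then a else 0) + (if u \<in> C then b else 0) +
      (if w \<in> C then c else 0) + (if e1 \<in> C then y1 else 0) + (if e2 \<in> C then y2 else 0) +
      (if e3 \<in> C then y3 else 0)" if "finite C" for C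
    using that by (simp add: \<alpha>_def sum.distrib)
  moreover have "(\<Sum>f\<in>C1. \<alpha> f) = a + c + y1" "(\<Sum>f\<in>C2. \<alpha> f) = a + b + y2"
    using sum_\<alpha>[OF fin(1)] sum_\<alpha>[OF fin(2)] t u w e by simp_all
  moreover have "(\<Sum>f\<in>C3. \<alpha> f) = of_bool (t \<in> C3) * a + b + c + y3"
    using sum_\<alpha>[OF fin(3)] u w e by (cases "t \<in> C3") simp_all
  ultimately show ?thesis
    using sums by (intro exI[of _ \<alpha>]) simp
qed

lemma K4'_angles:
  assumes K: "K4' (C1 \<union> C2 \<union> C3)"
    and fin: "finite C1" "finite C2" "finite C3"
    and reg: "two_regular C1" "two_regular C2" "two_regular C3"
    and e: "e1 \<in> C1" "e1 \<notin> C2" "e1 \<notin> C3" "e2 \<notin> C1" "e2 \<in> C2" "e2 \<notin> C3"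
      "e3 \<notin> C1" "e3 \<notin> C2" "e3 \<in> C3"
  shows "\<exists>\<alpha>. (\<forall>f. \<bar>\<alpha> f\<bar> \<le> pi / 2) \<and> cis (\<Sum>f\<in>C1. \<alpha> f) = cis c1 \<and>
    cis (\<Sum>f\<in>C2. \<alpha> f) = cis c2 \<and> cis (\<Sum>f\<in>C3. \<alpha> f) = cis c3"
proof -
  let ?V = "venn_classes (C1 \<union> C2 \<union> C3) C1 C2 C3"
  have "(True, False, False) \<in> ?V" "(False, True, False) \<in> ?V" "(False, False, True) \<in> ?V"
    unfolding venn_classes_def using e by (auto intro: rev_image_eqI)
  then have "{(True, True, False), (True, False, True), (False, True, True)} \<subseteq> ?V \<or>
    {(True, True, True), (True, False, True), (False, True, True)} \<subseteq> ?V \<or>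
    {(True, True, True), (True, True, False), (False, True, True)} \<subseteq> ?V \<or>
    {(True, True, True), (True, True, False), (True, False, True)} \<subseteq> ?V"
    using K4'_venn_classes[OF K refl reg] by blast
  then consider
      t u w where "t \<in> C1" "t \<in> C2" "u \<notin> C1" "u \<in> C2" "u \<in> C3" "w \<in> C1" "w \<notin> C2" "w \<in> C3"
    | t u w where "t \<in> C1" "t \<in> C3" "u \<notin> C1" "u \<in> C3" "u \<in> C2" "w \<in> C1" "w \<notin> C3" "w \<in> C2"
    | t u w where "t \<in> C2" "t \<in> C3" "u \<notin> C2" "u \<in> C3" "u \<in> C1" "w \<in> C2" "w \<notin> C3" "w \<in> C1"
    unfolding venn_classes_def by (simp add: image_iff) blast
  then show ?thesis
  proof cases
    case (1 t u w)
    show ?thesis by (rule theta_pattern_angles[OF fin 1 e])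
  next
    case (2 t u w)
    have "\<exists>\<alpha>. (\<forall>f. \<bar>\<alpha> f\<bar> \<le> pi / 2) \<and> cis (\<Sum>f\<in>C1. \<alpha> f) = cis c1 \<and>
        cis (\<Sum>f\<in>C3. \<alpha> f) = cis c3 \<and> cis (\<Sum>f\<in>C2. \<alpha> f) = cis c2"
      by (rule theta_pattern_angles[OF fin(1,3,2) 2 e(1,3,2,7,9,8,4,6,5)])
    then show ?thesis by (elim exE conjE) (rule exI, intro conjI; assumption)
  next
    case (3 t u w)
    have "\<exists>\<alpha>. (\<forall>f. \<bar>\<alpha> f\<bar> \<le> pi / 2) \<and> cis (\<Sum>f\<in>C2. \<alpha> f) = cis c2 \<and>
        cis (\<Sum>f\<in>C3. \<alpha> f) = cis c3 \<and> cis (\<Sum>f\<in>C1. \<alpha> f) = cis c1"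
      by (rule theta_pattern_angles[OF fin(2,3,1) 3 e(5,6,4,8,9,7,2,3,1)])
    then show ?thesis by (elim exE conjE) (rule exI, intro conjI; assumption)
  qed
qed

text \<open>Fundamental subgraphs meeting in an edge coincide, so angles chosen independently on
  each fundamental subgraph combine to a single assignment.\<close>
lemma angles_combine:
  fixes C :: "'k \<Rightarrow> 'e set" and c :: "'k \<Rightarrow> real"
  assumes cover: "\<forall>k\<in>K. \<exists>S\<in>\<S>. k \<in> S"
    and disj: "\<And>S S' f. S \<in> \<S> \<Longrightarrow> S' \<in> \<S> \<Longrightarrow> f \<in> \<Union>(C ` S) \<Longrightarrow> f \<in> \<Union>(C ` S') \<Longrightarrow> S = S'"
    and local: "\<forall>S\<in>\<S>. \<exists>\<alpha>. (\<forall>f. \<bar>\<alpha> f\<bar> \<le> pi / 2) \<and> (\<forall>k\<in>S. cis (\<Sum>f\<in>C k. \<alpha> f) = cis (c k))"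
  shows "\<exists>\<alpha>. (\<forall>f. \<bar>\<alpha> f\<bar> \<le> pi / 2) \<and> (\<forall>k\<in>K. cis (\<Sum>f\<in>C k. \<alpha> f) = cis (c k))"
proof -
  obtain A where A: "\<forall>S\<in>\<S>. (\<forall>f. \<bar>A S f\<bar> \<le> pi / 2) \<and> (\<forall>k\<in>S. cis (\<Sum>f\<in>C k. A S f) = cis (c k))"
    using bchoice[OF local] by (elim exE) simp
  then have A_bound: "\<And>S f. S \<in> \<S> \<Longrightarrow> \<bar>A S f\<bar> \<le> pi / 2"
    and A_sum: "\<And>S k. S \<in> \<S> \<Longrightarrow> k \<in> S \<Longrightarrow> cis (\<Sum>f\<in>C k. A S f) = cis (c k)"
    by blast+
  define \<alpha> where "\<alpha> f = (if \<exists>S\<in>\<S>. f \<in> \<Union>(C ` S)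
    then A (SOME S. S \<in> \<S> \<and> f \<in> \<Union>(C ` S)) f else 0)" for f
  have \<alpha>_eq: "\<alpha> f = A S f" if "S \<in> \<S>" "f \<in> \<Union>(C ` S)" for S f
  proof -
    have "(SOME S. S \<in> \<S> \<and> f \<in> \<Union>(C ` S)) = S"
    proof (rule some_equality)
      fix S' assume "S' \<in> \<S> \<and> f \<in> \<Union>(C ` S')"
      then show "S' = S" using disj[of S' S f] that by simp
    qed (use that in simp)
    then show ?thesis using that by (auto simp: \<alpha>_def)
  qed
  have bound: "\<bar>\<alpha> f\<bar> \<le> pi / 2" for f
  proof (cases "\<exists>S\<in>\<S>. f \<in> \<Union>(C ` S)")
    case True
    then obtain S where "S \<in> \<S>" "f \<in> \<Union>(C ` S)" by blast
    then show ?thesis using \<alpha>_eq[of S f] A_bound[of S f] by simp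
  next
    case False
    then have "\<alpha> f = 0" unfolding \<alpha>_def by (rule if_not_P)
    then show ?thesis using pi_gt_zero by simp
  qed
  have sums: "cis (\<Sum>f\<in>C k. \<alpha> f) = cis (c k)" if k: "k \<in> K" for k
  proof -
    obtain S where "S \<in> \<S>" "k \<in> S" using cover k by blast
    then have "(\<Sum>f\<in>C k. \<alpha> f) = (\<Sum>f\<in>C k. A S f)"
      by (intro sum.cong refl \<alpha>_eq) blast+
    then show ?thesis using A_sum[OF \<open>S \<in> \<S>\<close> \<open>k \<in> S\<close>] by simp
  qed
  show ?thesis
    by (intro exI[of _ \<alpha>] conjI allI ballI bound sums)
qed

context normal_tree
begin

lemma angles_if_DEP_plain:
  assumes S: "S \<subseteq> E - T" and "DEP_plain T S"
  shows "\<exists>\<alpha>. (\<forall>f. \<bar>\<alpha> f\<bar> \<le> pi / 2) \<and> (\<forall>e\<in>S. cis (\<Sum>f\<in>fcycle T e. \<alpha> f) = cis (c e))"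
proof -
  obtain ks where ks: "set ks = S"
    "\<forall>i. 1 \<le> i \<and> i < length ks \<longrightarrow> card (fcycle T (ks ! i) - cyc_sum T (set (take i ks))) > 1"
    using assms(2) unfolding DEP_plain_def by blast
  have "\<forall>i<length ks. card (fcycle T (ks ! i) - ({} \<union> \<Union>(fcycle T ` set (take i ks)))) > 1"
  proof (intro allI impI)
    fix i assume i: "i < length ks"
    show "card (fcycle T (ks ! i) - ({} \<union> \<Union>(fcycle T ` set (take i ks)))) > 1"
    proof (cases "i = 0")
      case True
      then have "ks ! i \<in> E - T" using i ks(1) S nth_mem by blast
      then have "card (fcycle T (ks ! i)) \<ge> 2" by (rule card_fcycle_ge_2)
      then show ?thesis using True by simp
    next
      case False
      then have "card (fcycle T (ks ! i) - cyc_sum T (set (take i ks))) > 1"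
        using i ks(2) by simp
      then show ?thesis by (simp add: cyc_sum_def)
    qed
  qed
  moreover have "\<forall>k\<in>set ks. finite (fcycle T k)"
    using ks(1) S finite_fcycle by blast
  moreover have "\<forall>f. \<bar>(\<lambda>_. 0 :: real) f\<bar> \<le> pi / 2" using pi_gt_zero by simp
  ultimately have "\<exists>\<alpha>. (\<forall>f. \<bar>\<alpha> f\<bar> \<le> pi / 2) \<and> (\<forall>f\<in>{}. \<alpha> f = 0) \<and>
      (\<forall>k\<in>set ks. cis (\<Sum>f\<in>fcycle T k. \<alpha> f) = cis (c k))"
    by (rule angles_extend_by_two_new_edges[where \<alpha>\<^sub>0 = "\<lambda>_. 0"])
  then show ?thesis unfolding ks(1) by (elim exE conjE) (rule exI, intro conjI; assumption)
qed

lemma angles_if_DEP_K4: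
  assumes S: "S \<subseteq> E - T" and "DEP_K4 T S"
  shows "\<exists>\<alpha>. (\<forall>f. \<bar>\<alpha> f\<bar> \<le> pi / 2) \<and> (\<forall>e\<in>S. cis (\<Sum>f\<in>fcycle T e. \<alpha> f) = cis (c e))"
proof -
  obtain e1 e2 e3 ks where e: "e1 \<in> S" "e2 \<in> S" "e3 \<in> S" "distinct [e1, e2, e3]"
    and K: "K4' (fcycle T e1 \<union> fcycle T e2 \<union> fcycle T e3)"
    and ks: "distinct ks" "set ks = S - {e1, e2, e3}"
      "\<forall>i < length ks. card (fcycle T (ks ! i) -
         (fcycle T e1 \<union> fcycle T e2 \<union> fcycle T e3 \<union> cyc_sum T (set (take i ks)))) > 1"
    using assms(2) unfolding DEP_K4_def by (elim bexE exE conjE) (rule that; assumption)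
  let ?H = "fcycle T e1 \<union> fcycle T e2 \<union> fcycle T e3"
  have eE: "e1 \<in> E - T" "e2 \<in> E - T" "e3 \<in> E - T" using e S by auto
  have "e1 \<in> fcycle T e1" "e1 \<notin> fcycle T e2" "e1 \<notin> fcycle T e3"
    "e2 \<notin> fcycle T e1" "e2 \<in> fcycle T e2" "e2 \<notin> fcycle T e3"
    "e3 \<notin> fcycle T e1" "e3 \<notin> fcycle T e2" "e3 \<in> fcycle T e3"
    using eE e(4) nontree_edge_in_fcycle nontree_edge_notin_fcycle by auto
  then have "\<exists>\<alpha>. (\<forall>f. \<bar>\<alpha> f\<bar> \<le> pi / 2) \<and> cis (\<Sum>f\<in>fcycle T e1. \<alpha> f) = cis (c e1) \<and>
      cis (\<Sum>f\<in>fcycle T e2. \<alpha> f) = cis (c e2) \<and> cis (\<Sum>f\<in>fcycle T e3. \<alpha> f) = cis (c e3)"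
    by (intro K4'_angles[OF K finite_fcycle[OF eE(1)] finite_fcycle[OF eE(2)] finite_fcycle[OF eE(3)]
      two_regular_fcycle[OF eE(1)] two_regular_fcycle[OF eE(2)] two_regular_fcycle[OF eE(3)]])
  then obtain \<alpha>\<^sub>0 where \<alpha>\<^sub>0: "\<forall>f. \<bar>\<alpha>\<^sub>0 f\<bar> \<le> pi / 2"
    "cis (\<Sum>f\<in>fcycle T e1. \<alpha>\<^sub>0 f) = cis (c e1)" "cis (\<Sum>f\<in>fcycle T e2. \<alpha>\<^sub>0 f) = cis (c e2)"
    "cis (\<Sum>f\<in>fcycle T e3. \<alpha>\<^sub>0 f) = cis (c e3)"
    by (elim exE conjE)
  have "\<forall>i<length ks. card (fcycle T (ks ! i) - (?H \<union> \<Union>(fcycle T ` set (take i ks)))) > 1"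
    using ks(3) by (simp add: cyc_sum_def)
  moreover have "\<forall>k\<in>set ks. finite (fcycle T k)"
    using ks(2) S finite_fcycle by blast
  ultimately have "\<exists>\<alpha>. (\<forall>f. \<bar>\<alpha> f\<bar> \<le> pi / 2) \<and> (\<forall>f\<in>?H. \<alpha> f = \<alpha>\<^sub>0 f) \<and>
      (\<forall>k\<in>set ks. cis (\<Sum>f\<in>fcycle T k. \<alpha> f) = cis (c k))"
    using \<alpha>\<^sub>0(1) by (rule angles_extend_by_two_new_edges)
  then obtain \<alpha> where \<alpha>: "\<forall>f. \<bar>\<alpha> f\<bar> \<le> pi / 2" "\<forall>f\<in>?H. \<alpha> f = \<alpha>\<^sub>0 f"
    "\<forall>k\<in>set ks. cis (\<Sum>f\<in>fcycle T k. \<alpha> f) = cis (c k)"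
    by (elim exE conjE)
  have "(\<Sum>f\<in>fcycle T e'. \<alpha> f) = (\<Sum>f\<in>fcycle T e'. \<alpha>\<^sub>0 f)" if "e' \<in> {e1, e2, e3}" for e'
    using \<alpha>(2) that by (intro sum.cong) auto
  then have "cis (\<Sum>f\<in>fcycle T e. \<alpha> f) = cis (c e)" if "e \<in> S" for e
    using that ks(2) \<alpha>(3) \<alpha>\<^sub>0(2-4) by (cases "e \<in> {e1, e2, e3}") auto
  with \<alpha>(1) show ?thesis by (intro exI[of _ \<alpha>]) simp
qed

lemma angles_exist:
  assumes "EDEP E T"
  shows "\<exists>\<alpha>. (\<forall>f. \<bar>\<alpha> f\<bar> \<le> pi / 2) \<and> (\<forall>e\<in>E - T. cis (\<Sum>f\<in>fcycle T e. \<alpha> f) = cis (c e))"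
proof (rule angles_combine[where \<S> = "{S. fundamental_coll E T S}"])
  show "\<forall>e\<in>E - T. \<exists>S\<in>{S. fundamental_coll E T S}. e \<in> S"
    using fundamental_coll_exists by (metis mem_Collect_eq)
  show "S = S'" if "S \<in> {S. fundamental_coll E T S}" "S' \<in> {S. fundamental_coll E T S}"
    "f \<in> \<Union>(fcycle T ` S)" "f \<in> \<Union>(fcycle T ` S')" for S S' f
    using that fundamental_coll_eq by (simp add: cyc_sum_def)
  show "\<forall>S\<in>{S. fundamental_coll E T S}. \<exists>\<alpha>. (\<forall>f. \<bar>\<alpha> f\<bar> \<le> pi / 2) \<and>
      (\<forall>e\<in>S. cis (\<Sum>f\<in>fcycle T e. \<alpha> f) = cis (c e))"
  proof
    fix S assume "S \<in> {S. fundamental_coll E T S}"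
    then have "fundamental_coll E T S" "S \<subseteq> E - T"
      by (auto simp: fundamental_coll_def admissible_coll_def)
    then show "\<exists>\<alpha>. (\<forall>f. \<bar>\<alpha> f\<bar> \<le> pi / 2) \<and> (\<forall>e\<in>S. cis (\<Sum>f\<in>fcycle T e. \<alpha> f) = cis (c e))"
      using assms angles_if_DEP_plain angles_if_DEP_K4 unfolding EDEP_def by blast
  qed
qed

text \<open>A gain of angle \<open>\<plusminus>\<alpha> f\<close> on each edge (sign given by the orientation of \<open>G_T\<close>) has
  real part \<open>cos (\<alpha> f) \<ge> 0\<close>, and the gain of a fundamental cycle becomes \<open>cis\<close> of the sum
  of its angles.\<close>
lemma GNRP_if_angles:
  assumes "\<And>c. \<exists>\<alpha>. (\<forall>f. \<bar>\<alpha> f\<bar> \<le> pi / 2) \<and> (\<forall>e\<in>E - T. cis (\<Sum>f\<in>fcycle T e. \<alpha> f) = cis (c e))"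
  shows "GNRP V E T r"
  unfolding GNRP_def
proof (intro allI impI)
  fix c :: "'a set \<Rightarrow> real"
  obtain \<alpha> where \<alpha>: "\<forall>f. \<bar>\<alpha> f\<bar> \<le> pi / 2" "\<forall>e\<in>E - T. cis (\<Sum>f\<in>fcycle T e. \<alpha> f) = cis (c e)"
    using assms by blast
  define \<phi> where "\<phi> s t = (if orient T r {s, t} = (s, t) then cis (\<alpha> {s, t}) else cis (- \<alpha> {s, t}))"
    for s t
  have gain: "(case orient T r f of (a, b) \<Rightarrow> \<phi> a b) = cis (\<alpha> f)" if "f \<in> E" for f
    using that by (cases rule: orient_edge) (simp add: \<phi>_def)
  have "gain_fun E \<phi>"
    unfolding gain_fun_def
  proof (intro allI impI conjI)
    fix s t assume "{s, t} \<in> E"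
    then obtain a b where ab: "orient T r {s, t} = (a, b)" "{s, t} = {a, b}" "a \<noteq> b"
      by (rule orient_edge)
    then have "(a, b) = (s, t) \<or> (a, b) = (t, s)" "s \<noteq> t" by (auto simp: doubleton_eq_iff)
    then show "\<phi> t s = inverse (\<phi> s t)"
      using ab(1) by (auto simp: \<phi>_def insert_commute cis_inverse)
  qed (simp add: \<phi>_def)
  moreover have "cycle_gain T r \<phi> e = exp (\<i> * complex_of_real (c e))" if "e \<in> E - T" for e
  proof -
    have "cycle_gain T r \<phi> e = (\<Prod>f\<in>fcycle T e. cis (\<alpha> f))"
      unfolding cycle_gain_def using fcycle_subset_E[OF that] gain by (intro prod.cong) auto
    also have "\<dots> = cis (\<Sum>f\<in>fcycle T e. \<alpha> f)"
      using finite_fcycle[OF that] by (induction rule: finite_induct) (auto simp: cis_mult)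
    finally show ?thesis using \<alpha>(2) that by (simp add: cis_conv_exp)
  qed
  moreover have "0 \<le> Re (gain_adj E \<phi> s t)" for s t
  proof -
    have "\<bar>\<alpha> {s, t}\<bar> \<le> pi / 2" using \<alpha>(1) by blast
    then have "0 \<le> cos (\<alpha> {s, t})" by (intro cos_ge_zero) arith+
    then show ?thesis by (simp add: gain_adj_def \<phi>_def)
  qed
  ultimately show "\<exists>\<phi>. gain_fun E \<phi> \<and> (\<forall>e\<in>E - T. cycle_gain T r \<phi> e = exp (\<i> * complex_of_real (c e))) \<and>
      (\<forall>s\<in>V. \<forall>t\<in>V. 0 \<le> Re (gain_adj E \<phi> s t))"
    by blast
qed

end

theorem theorem4p4:
  fixes V :: "'a set" and E :: "'a set set" and T :: "'a set set" and r :: 'a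
  assumes "simple_graph V E"
    and "connected_graph V E"
    and "normal_spanning_tree V E T r"
    and "EDEP E T"
  shows "GNRP V E T r"
proof -
  interpret normal_tree V E T r
    using assms(1,3) by unfold_locales
  show ?thesis
    using GNRP_if_angles angles_exist[OF assms(4)] by blast
qed

end
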